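(* Let $\beta\ge1$ and let $x,y\in\mathbb R^d\setminus\{0\}$. For $\gamma>0$ define $$\cos_{(\beta,\gamma)}(x,y)=\Big\langle\Big(\frac{x}{\|x\|_{\beta+\gamma}}\Big)^{\ominus\beta},\Big(\frac{y}{\|y\|_{\beta+\gamma}}\Big)^{\ominus\gamma}\Big\rangle .$$ Then (a) $\displaystyle\lim_{\gamma\to0}\cos_{(\beta,\gamma)}(x,y)=\Big\langle\Big(\frac{x}{\|x\|_\beta}\Big)^{\ominus\beta},\mathrm{sign}(y)\Big\rangle$, where $\mathrm{sign}(y)=(\mathrm{sign}(y_i))_{i=1}^d$; (b) $\displaystyle\lim_{\gamma\to\infty}\cos_{(\beta,\gamma)}(x,y)=\Big\langle\Big(\frac{x}{\|x\|_\infty}\Big)^{\ominus\beta},\frac{\mathrm{sign}_\infty(y)}{\|\mathrm{sign}_\infty(y)\|_1}\Big\rangle$, where the $i$-th component of $\mathrm{sign}_\infty(y)$ is $\mathrm{sign}(y_i)\,\mathbb I(|y_i|=\|y\|_\infty)$.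
   Context: $\langle\cdot,\cdot\rangle$ is the Euclidean inner product on $\mathbb R^d$; $\|x\|_r=(\sum_i|x_i|^r)^{1/r}$ and $\|x\|_\infty=\max_i|x_i|$. For a vector $v$ and $a>0$, $v^{\ominus a}$ is taken componentwise with $t^{\ominus a}=\mathrm{sign}(t)|t|^a$ and $\mathrm{sign}(0)=0$; $\mathbb I$ is the indicator function. *)

theory Defs
  imports "HOL-Analysis.Analysis"
begin

definition lnorm :: "real \<Rightarrow> real^'d \<Rightarrow> real" where
  "lnorm r x = (\<Sum>i\<in>UNIV. \<bar>x $ i\<bar> powr r) powr (1 / r)"

definition linf :: "real^'d \<Rightarrow> real" where
  "linf x = Max ((\<lambda>i. \<bar>x $ i\<bar>) ` UNIV)"

text \<open>signed power t^(ominus a) = sign(t) |t|^a, with sign 0 = 0\<close>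
definition spow :: "real \<Rightarrow> real \<Rightarrow> real" where
  "spow a t = sgn t * \<bar>t\<bar> powr a"

definition vspow :: "real \<Rightarrow> real^'d \<Rightarrow> real^'d" where
  "vspow a v = (\<chi> i. spow a (v $ i))"

definition vsign :: "real^'d \<Rightarrow> real^'d" where
  "vsign y = (\<chi> i. sgn (y $ i))"

definition sign_inf :: "real^'d \<Rightarrow> real^'d" where
  "sign_inf y = (\<chi> i. sgn (y $ i) * (if \<bar>y $ i\<bar> = linf y then 1 else 0))"

definition cos_bg :: "real \<Rightarrow> real \<Rightarrow> real^'d \<Rightarrow> real^'d \<Rightarrow> real" where
  "cos_bg \<beta> \<gamma> x y =
     vspow \<beta> ((1 / lnorm (\<beta> + \<gamma>) x) *\<^sub>R x) \<bullet> vspow \<gamma> ((1 / lnorm (\<beta> + \<gamma>) y) *\<^sub>R y)"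

end

theory Submission
  imports Defs "HOL-Real_Asymp.Real_Asymp"
begin

text \<open>For z \<noteq> 0 and p \<noteq> 0 we have \<parallel>z\<parallel>_p = \<parallel>z\<parallel>_\<infinity> S_z(p)^(1/p), where
  S_z(p) = \<Sum>_j (|z_j| / \<parallel>z\<parallel>_\<infinity>)^p \<ge> 1 is the scaled power sum. Hence p \<mapsto> \<parallel>z\<parallel>_p is
  continuous, and since S_z(p) tends to the number K of coordinates of maximal modulus as
  p \<rightarrow> \<infinity>, \<parallel>z\<parallel>_p \<rightarrow> \<parallel>z\<parallel>_\<infinity>. The i-th summand of the cosine is
  x_i^(\<ominus>\<beta>) / \<parallel>x\<parallel>_(\<beta>+\<gamma>)^\<beta> times sign(y_i) |y_i|^\<gamma> / \<parallel>y\<parallel>_(\<beta>+\<gamma>)^\<gamma>. As \<gamma> \<rightarrow> 0 the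
  second factor tends to sign(y_i). For large \<gamma> it equals
  sign(y_i) (|y_i| / \<parallel>y\<parallel>_\<infinity>)^\<gamma> / S_y(\<beta>+\<gamma>)^(\<gamma>/(\<beta>+\<gamma>)), which tends to
  sign(y_i) [|y_i| = \<parallel>y\<parallel>_\<infinity>] / K; and K = \<parallel>sign_\<infinity>(y)\<parallel>_1.\<close>

lemma tendsto_powr_at_top_base_le_1:
  fixes a :: real
  assumes "0 \<le> a" "a \<le> 1"
  shows "((\<lambda>t. a powr t) \<longlongrightarrow> of_bool (a = 1)) at_top"
proof -
  consider "a = 0" | "a = 1" | "0 < a" "a < 1"
    using assms by fastforce
  then show ?thesis
  proof cases
    case 3
    then have "ln a < 0" by simp
    then have "filterlim (\<lambda>t. t * ln a) at_bot at_top" by real_asymp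
    then have "((\<lambda>t. exp (t * ln a)) \<longlongrightarrow> 0) at_top"
      using exp_at_bot filterlim_compose by blast
    with 3 show ?thesis by (simp add: powr_def mult.commute)
  qed simp_all
qed

lemma abs_le_linf: "\<bar>z $ j\<bar> \<le> linf z"
  unfolding linf_def by (rule Max_ge) auto

lemma linf_attained: "\<exists>j. \<bar>z $ j\<bar> = linf z"
proof -
  have "linf z \<in> (\<lambda>i. \<bar>z $ i\<bar>) ` UNIV"
    unfolding linf_def by (rule Max_in) auto
  then show ?thesis by auto
qed

lemma linf_pos:
  assumes "z \<noteq> 0"
  shows "0 < linf z"
proof -
  obtain j where "z $ j \<noteq> 0" using assms by (metis vec_eq_iff zero_index)
  then show ?thesis using abs_le_linf[of z j] by linarith
qed

definition scaled_power_sum :: "real^'d \<Rightarrow> real \<Rightarrow> real" where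
  "scaled_power_sum z p = (\<Sum>j\<in>UNIV. (\<bar>z $ j\<bar> / linf z) powr p)"

lemma scaled_power_sum_ge_1:
  assumes "z \<noteq> 0"
  shows "1 \<le> scaled_power_sum z p"
proof -
  obtain j where j: "\<bar>z $ j\<bar> = linf z" using linf_attained by blast
  have "1 = (\<bar>z $ j\<bar> / linf z) powr p" using j linf_pos[OF assms] by simp
  also have "\<dots> \<le> scaled_power_sum z p"
    unfolding scaled_power_sum_def by (rule member_le_sum) auto
  finally show ?thesis .
qed

lemma lnorm_eq_linf_mult:
  assumes "z \<noteq> 0" "p \<noteq> 0"
  shows "lnorm p z = linf z * scaled_power_sum z p powr (1 / p)"
proof -
  define M where "M = linf z"
  have M: "0 < M" using linf_pos[OF assms(1)] by (simp add: M_def)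
  have "(\<Sum>j\<in>UNIV. \<bar>z $ j\<bar> powr p) = (\<Sum>j\<in>UNIV. M powr p * (\<bar>z $ j\<bar> / M) powr p)"
    using M by (simp add: powr_divide)
  also have "\<dots> = M powr p * scaled_power_sum z p"
    by (simp add: scaled_power_sum_def M_def sum_distrib_left)
  finally have "lnorm p z = (M powr p * scaled_power_sum z p) powr (1 / p)"
    by (simp only: lnorm_def)
  also have "\<dots> = M * scaled_power_sum z p powr (1 / p)"
    using M assms(2) scaled_power_sum_ge_1[OF assms(1), of p] by (simp add: powr_mult powr_powr)
  finally show ?thesis unfolding M_def .
qed

lemma lnorm_pos:
  assumes "z \<noteq> 0" "p \<noteq> 0"
  shows "0 < lnorm p z"
  using linf_pos[OF assms(1)] scaled_power_sum_ge_1[OF assms(1), of p]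
  by (simp add: lnorm_eq_linf_mult[OF assms])

lemma tendsto_scaled_power_sum:
  assumes "(f \<longlongrightarrow> p) F"
  shows "((\<lambda>t. scaled_power_sum z (f t)) \<longlongrightarrow> scaled_power_sum z p) F"
  unfolding scaled_power_sum_def
proof (intro tendsto_sum)
  fix j
  show "((\<lambda>t. (\<bar>z $ j\<bar> / linf z) powr f t) \<longlongrightarrow> (\<bar>z $ j\<bar> / linf z) powr p) F"
  proof (cases "\<bar>z $ j\<bar> / linf z = 0")
    case True
    then show ?thesis unfolding True by simp
  next
    case False
    then show ?thesis by (intro tendsto_powr tendsto_const assms)
  qed
qed

lemma coord_ratio_powr_tendsto_at_top:
  assumes "z \<noteq> 0" "filterlim f at_top F"
  shows "((\<lambda>t. (\<bar>z $ j\<bar> / linf z) powr f t) \<longlongrightarrow> of_bool (\<bar>z $ j\<bar> = linf z)) F"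
proof -
  have M: "0 < linf z" using linf_pos[OF assms(1)] .
  then have "0 \<le> \<bar>z $ j\<bar> / linf z" "\<bar>z $ j\<bar> / linf z \<le> 1"
    using abs_le_linf[of z j] by auto
  from tendsto_powr_at_top_base_le_1[OF this] assms(2)
  have "((\<lambda>t. (\<bar>z $ j\<bar> / linf z) powr f t) \<longlongrightarrow> of_bool (\<bar>z $ j\<bar> / linf z = 1)) F"
    by (rule filterlim_compose)
  moreover have "(\<bar>z $ j\<bar> / linf z = 1) = (\<bar>z $ j\<bar> = linf z)"
    using M by auto
  ultimately show ?thesis by simp
qed

lemma scaled_power_sum_tendsto_card:
  assumes "z \<noteq> 0" "filterlim f at_top F"
  shows "((\<lambda>t. scaled_power_sum z (f t)) \<longlongrightarrow> real (card {j. \<bar>z $ j\<bar> = linf z})) F"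
proof -
  have "((\<lambda>t. scaled_power_sum z (f t)) \<longlongrightarrow> (\<Sum>j\<in>UNIV. of_bool (\<bar>z $ j\<bar> = linf z))) F"
    unfolding scaled_power_sum_def
    by (intro tendsto_sum coord_ratio_powr_tendsto_at_top assms)
  then show ?thesis by simp
qed

lemma card_max_coords_pos: "0 < card {j. \<bar>z $ j\<bar> = linf z}"
  using linf_attained[of z] by (simp add: card_gt_0_iff)

lemma tendsto_lnorm:
  assumes "z \<noteq> 0" "(f \<longlongrightarrow> p) F" "p \<noteq> 0"
  shows "((\<lambda>t. lnorm (f t) z) \<longlongrightarrow> lnorm p z) F"
proof -
  have "((\<lambda>t. linf z * scaled_power_sum z (f t) powr (1 / f t)) \<longlongrightarrow> lnorm p z) F"
    unfolding lnorm_eq_linf_mult[OF assms(1,3)]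
    using scaled_power_sum_ge_1[OF assms(1), of p] assms(3)
    by (intro tendsto_intros tendsto_scaled_power_sum assms(2)) auto
  moreover have "eventually (\<lambda>t. linf z * scaled_power_sum z (f t) powr (1 / f t) = lnorm (f t) z) F"
    using tendsto_imp_eventually_ne[OF assms(2,3)]
    by eventually_elim (simp add: lnorm_eq_linf_mult[OF assms(1)])
  ultimately show ?thesis by (rule Lim_transform_eventually)
qed

lemma lnorm_tendsto_linf:
  assumes "z \<noteq> 0" "filterlim f at_top F"
  shows "((\<lambda>t. lnorm (f t) z) \<longlongrightarrow> linf z) F"
proof -
  have "((\<lambda>t. 1 / f t) \<longlongrightarrow> 0) F"
    using assms(2) by (intro tendsto_divide_0[OF tendsto_const] filterlim_at_top_imp_at_infinity)
  moreover have K: "real (card {j. \<bar>z $ j\<bar> = linf z}) \<noteq> 0"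
    using card_max_coords_pos[of z] by linarith
  ultimately have "((\<lambda>t. linf z * scaled_power_sum z (f t) powr (1 / f t)) \<longlongrightarrow>
      linf z * real (card {j. \<bar>z $ j\<bar> = linf z}) powr 0) F"
    by (intro tendsto_mult tendsto_const tendsto_powr scaled_power_sum_tendsto_card assms)
  then have "((\<lambda>t. linf z * scaled_power_sum z (f t) powr (1 / f t)) \<longlongrightarrow> linf z) F"
    by (simp only: powr_zero_eq_one if_not_P[OF K] mult_1_right)
  moreover have "eventually (\<lambda>t. linf z * scaled_power_sum z (f t) powr (1 / f t) = lnorm (f t) z) F"
    using assms(2) unfolding filterlim_at_top_dense
    by (auto elim!: allE[of _ 0] eventually_mono simp: lnorm_eq_linf_mult[OF assms(1)])
  ultimately show ?thesis by (rule Lim_transform_eventually)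
qed

lemma lnorm_one_sign_inf:
  assumes "y \<noteq> 0"
  shows "lnorm 1 (sign_inf y) = real (card {j. \<bar>y $ j\<bar> = linf y})"
proof -
  have "\<bar>sign_inf y $ j\<bar> powr 1 = of_bool (\<bar>y $ j\<bar> = linf y)" for j
    using linf_pos[OF assms] by (auto simp: sign_inf_def abs_mult sgn_if)
  then show ?thesis by (simp add: lnorm_def)
qed

lemma spow_divide_pos: "0 < L \<Longrightarrow> spow a (c / L) = spow a c / L powr a"
  by (simp add: spow_def powr_divide)

lemma spow_tendsto_sgn:
  assumes "(g \<longlongrightarrow> 0) F"
  shows "((\<lambda>t. spow (g t) c) \<longlongrightarrow> sgn c) F"
proof (cases "c = 0")
  case False
  then have "((\<lambda>t. \<bar>c\<bar> powr g t) \<longlongrightarrow> \<bar>c\<bar> powr 0) F"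
    by (intro tendsto_powr tendsto_const assms) simp
  then have "((\<lambda>t. sgn c * \<bar>c\<bar> powr g t) \<longlongrightarrow> sgn c * \<bar>c\<bar> powr 0) F"
    by (rule tendsto_mult_left)
  with False show ?thesis
    unfolding spow_def by simp
qed (simp add: spow_def)

lemma spow_divide_lnorm:
  assumes "y \<noteq> 0" "p \<noteq> 0"
  shows "spow g (c / lnorm p y) =
    sgn c * (\<bar>c\<bar> / linf y) powr g / scaled_power_sum y p powr (g / p)"
proof -
  have M: "0 < linf y" using linf_pos[OF assms(1)] .
  have S: "0 < scaled_power_sum y p"
    using scaled_power_sum_ge_1[OF assms(1), of p] by linarith
  have "spow g (c / lnorm p y) = sgn c * (\<bar>c\<bar> powr g / lnorm p y powr g)"
    using lnorm_pos[OF assms] by (simp add: spow_def powr_divide)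
  also have "lnorm p y powr g = linf y powr g * scaled_power_sum y p powr (g / p)"
    unfolding lnorm_eq_linf_mult[OF assms] using M S by (simp add: powr_mult powr_powr)
  also have "sgn c * (\<bar>c\<bar> powr g / (linf y powr g * scaled_power_sum y p powr (g / p))) =
      sgn c * (\<bar>c\<bar> / linf y) powr g / scaled_power_sum y p powr (g / p)"
    using M by (simp add: powr_divide)
  finally show ?thesis .
qed

lemma cos_bg_eq_sum:
  "cos_bg b g x y = (\<Sum>i\<in>UNIV. spow b (x $ i / lnorm (b + g) x) * spow g (y $ i / lnorm (b + g) y))"
  unfolding cos_bg_def inner_vec_def vspow_def by simp

lemma cos_bg_tendsto_at_right_0:
  fixes x y :: "real^'d"
  assumes "0 < \<beta>" "x \<noteq> 0" "y \<noteq> 0"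
  shows "((\<lambda>\<gamma>. cos_bg \<beta> \<gamma> x y) \<longlongrightarrow> vspow \<beta> ((1 / lnorm \<beta> x) *\<^sub>R x) \<bullet> vsign y) (at_right 0)"
proof -
  let ?Lx = "\<lambda>\<gamma>. lnorm (\<beta> + \<gamma>) x" and ?Ly = "\<lambda>\<gamma>. lnorm (\<beta> + \<gamma>) y"
  let ?f = "\<lambda>\<gamma>. \<Sum>i\<in>UNIV. spow \<beta> (x $ i) / ?Lx \<gamma> powr \<beta> * (spow \<gamma> (y $ i) / ?Ly \<gamma> powr \<gamma>)"
  have "((\<lambda>\<gamma>. \<beta> + \<gamma>) \<longlongrightarrow> \<beta>) (at_right 0)"
    using tendsto_add[OF tendsto_const tendsto_ident_at, of \<beta> 0 "{0<..}"] by simp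
  then have Lx: "(?Lx \<longlongrightarrow> lnorm \<beta> x) (at_right 0)" and Ly: "(?Ly \<longlongrightarrow> lnorm \<beta> y) (at_right 0)"
    using tendsto_lnorm assms by auto
  have pos: "0 < lnorm \<beta> x" "0 < lnorm \<beta> y"
    using lnorm_pos[OF assms(2)] lnorm_pos[OF assms(3)] assms(1) by simp_all
  have "(?f \<longlongrightarrow> (\<Sum>i\<in>UNIV. spow \<beta> (x $ i) / lnorm \<beta> x powr \<beta> * (sgn (y $ i) / lnorm \<beta> y powr 0)))
      (at_right 0)"
    using pos by (intro tendsto_sum tendsto_mult tendsto_divide tendsto_powr tendsto_const
        spow_tendsto_sgn Lx Ly tendsto_ident_at) auto
  also have "(\<Sum>i\<in>UNIV. spow \<beta> (x $ i) / lnorm \<beta> x powr \<beta> * (sgn (y $ i) / lnorm \<beta> y powr 0)) =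
      vspow \<beta> ((1 / lnorm \<beta> x) *\<^sub>R x) \<bullet> vsign y"
    using pos by (simp add: inner_vec_def vspow_def vsign_def spow_divide_pos)
  finally show ?thesis
  proof (rule Lim_transform_eventually)
    show "eventually (\<lambda>\<gamma>. ?f \<gamma> = cos_bg \<beta> \<gamma> x y) (at_right 0)"
      using eventually_at_right_less[of 0]
    proof eventually_elim
      case (elim \<gamma>)
      then have "0 < ?Lx \<gamma>" "0 < ?Ly \<gamma>"
        using lnorm_pos[OF assms(2)] lnorm_pos[OF assms(3)] assms(1) by simp_all
      then show ?case by (simp add: cos_bg_eq_sum spow_divide_pos)
    qed
  qed
qed

lemma cos_bg_tendsto_at_top:
  fixes x y :: "real^'d"
  assumes "x \<noteq> 0" "y \<noteq> 0"
  shows "((\<lambda>\<gamma>. cos_bg \<beta> \<gamma> x y) \<longlongrightarrow>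
    vspow \<beta> ((1 / linf x) *\<^sub>R x) \<bullet> ((1 / lnorm 1 (sign_inf y)) *\<^sub>R sign_inf y)) at_top"
proof -
  define K where "K = real (card {j. \<bar>y $ j\<bar> = linf y})"
  let ?Lx = "\<lambda>\<gamma>. lnorm (\<beta> + \<gamma>) x"
  let ?f = "\<lambda>\<gamma>. \<Sum>i\<in>UNIV. spow \<beta> (x $ i) / ?Lx \<gamma> powr \<beta> *
    (sgn (y $ i) * (\<bar>y $ i\<bar> / linf y) powr \<gamma> / scaled_power_sum y (\<beta> + \<gamma>) powr (\<gamma> / (\<beta> + \<gamma>)))"
  have exponent: "filterlim (\<lambda>\<gamma>. \<beta> + \<gamma>) at_top at_top"
    by real_asymp
  have ratio: "((\<lambda>\<gamma>. \<gamma> / (\<beta> + \<gamma>)) \<longlongrightarrow> 1) at_top"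
    by real_asymp
  have Sy: "((\<lambda>\<gamma>. scaled_power_sum y (\<beta> + \<gamma>)) \<longlongrightarrow> K) at_top"
    unfolding K_def using assms(2) exponent by (rule scaled_power_sum_tendsto_card)
  have pos: "0 < linf x" "0 < K"
    using linf_pos[OF assms(1)] card_max_coords_pos by (auto simp: K_def)
  have "(?f \<longlongrightarrow> (\<Sum>i\<in>UNIV. spow \<beta> (x $ i) / linf x powr \<beta> *
      (sgn (y $ i) * of_bool (\<bar>y $ i\<bar> = linf y) / K powr 1))) at_top"
    using pos by (intro tendsto_sum tendsto_mult tendsto_divide tendsto_powr tendsto_const
        lnorm_tendsto_linf coord_ratio_powr_tendsto_at_top Sy assms exponent ratio filterlim_ident)
      auto
  also have "(\<Sum>i\<in>UNIV. spow \<beta> (x $ i) / linf x powr \<beta> *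
      (sgn (y $ i) * of_bool (\<bar>y $ i\<bar> = linf y) / K powr 1)) =
      vspow \<beta> ((1 / linf x) *\<^sub>R x) \<bullet> ((1 / lnorm 1 (sign_inf y)) *\<^sub>R sign_inf y)"
    unfolding lnorm_one_sign_inf[OF assms(2)] K_def[symmetric]
    using pos by (simp add: inner_vec_def vspow_def sign_inf_def spow_divide_pos of_bool_def)
  finally show ?thesis
  proof (rule Lim_transform_eventually)
    show "eventually (\<lambda>\<gamma>. ?f \<gamma> = cos_bg \<beta> \<gamma> x y) at_top"
      using eventually_gt_at_top[of "\<bar>\<beta>\<bar>"]
    proof eventually_elim
      case (elim \<gamma>)
      then have "\<beta> + \<gamma> \<noteq> 0" by linarith
      then show ?case
        using lnorm_pos[OF assms(1)]
        by (simp add: cos_bg_eq_sum spow_divide_pos spow_divide_lnorm[OF assms(2)])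
    qed
  qed
qed

theorem mainTheorem12:
  fixes x y :: "real^'d" and \<beta> :: real
  assumes "\<beta> \<ge> 1" and "x \<noteq> 0" and "y \<noteq> 0"
  shows "((\<lambda>\<gamma>. cos_bg \<beta> \<gamma> x y) \<longlongrightarrow>
            vspow \<beta> ((1 / lnorm \<beta> x) *\<^sub>R x) \<bullet> vsign y) (at_right 0) \<and>
         ((\<lambda>\<gamma>. cos_bg \<beta> \<gamma> x y) \<longlongrightarrow>
            vspow \<beta> ((1 / linf x) *\<^sub>R x) \<bullet> ((1 / lnorm 1 (sign_inf y)) *\<^sub>R sign_inf y)) at_top"
  using cos_bg_tendsto_at_right_0[of \<beta> x y] cos_bg_tendsto_at_top[of x y \<beta>] assms by simp

end
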